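(* Let $\mathcal S$ be a set. For $x\in\mathcal S$ and $\varepsilon>0$ let $(\xi^{x,\varepsilon}_n)_{n\ge0}$, $(\zeta^{x,\varepsilon}_n)_{n\ge0}$ be sequences of random variables adapted to a filtration $(\mathcal F^{x,\varepsilon}_n)$. Suppose $\xi^{x,\varepsilon}_0=0$ and there is a function $e(\varepsilon)>0$ such that $\mathbb E(\xi^{x,\varepsilon}_{n+1}\mid\mathcal F^{x,\varepsilon}_n)/e(\varepsilon)\to1$ as $\varepsilon\downarrow0$ uniformly in $x\in\mathcal S$, $n\ge0$ and the elements of the probability space (for suitable versions of the conditional expectations); and that $\mathbb E((\xi^{x,\varepsilon}_{n+1})^2\mid\mathcal F^{x,\varepsilon}_n)\le C(e(\varepsilon))^2$ for some constant $C$, all small $\varepsilon$, all $x\in\mathcal S$, $n\ge0$. Suppose $\zeta^{x,\varepsilon}_n\in\{0,1\}$, $\zeta^{x,\varepsilon}_0=1$, and $\zeta^{x,\varepsilon}_n=0$ implies $\zeta^{x,\varepsilon}_m=0$ for $m\ge n$. Suppose there is a positive function $r(\varepsilon)$ with $r(\varepsilon)\to0$ such that $\mathbb P(\zeta^{x,\varepsilon}_{n+1}=0\mid\zeta^{x,\varepsilon}_n=1)/r(\varepsilon)\to1$ as $\varepsilon\downarrow0$ uniformly in $x\in\mathcal S$, $n\ge0$. Let $K^{x,\varepsilon}=\min\{n:\zeta^{x,\varepsilon}_n=0\}$. Then for each $t\ge0$, $$\lim_{\varepsilon\downarrow0}\mathbb P\big(r(\varepsilon)K^{x,\varepsilon}\ge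 t\big)=e^{-t},\qquad\lim_{\varepsilon\downarrow0}\mathbb P\Big((e(\varepsilon))^{-1}r(\varepsilon)\sum_{n=0}^\infty\xi^{x,\varepsilon}_{n+1}\zeta^{x,\varepsilon}_n\ge t\Big)=e^{-t},$$ uniformly in $x\in\mathcal S$. *)

theory Defs
  imports "HOL-Probability.Probability"
begin

text \<open>K = min{n. zeta n = 0}, valued in enat (infinity if zeta never vanishes).\<close>
definition first_zero :: "(nat \<Rightarrow> 'a \<Rightarrow> real) \<Rightarrow> 'a \<Rightarrow> enat" where
  "first_zero \<zeta> \<omega> = (INF n\<in>{n. \<zeta> n \<omega> = 0}. enat n)"

end

theory Submission
  imports Defs
begin

(* While alive, the indicator zeta is switched off at each step with probability (1 +- d) r, so
   the survival probability after k steps lies between (1 - (1 + d) r)^k and (1 - (1 - d) r)^k;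
   for k close to t / r both bounds are exp (-t) up to O(t d + r), which is the law of r K.
   For the weighted sum, split sum_{n<K} xi_(n+1) into the drift sum_{n<K} E(xi_(n+1) | F_n),
   which lies between (1 - d) e K and (1 + d) e K, and the martingale
   sum_{n<N} zeta_n (xi_(n+1) - E(xi_(n+1) | F_n)), whose orthogonal increments have second
   moments O(e^2). Taking N close to 2 L / r, we have K <= N except with probability exp (-L), and
   by Chebyshev the martingale is below eta e / r except with probability O(r / eta^2). Off these
   small events (r / e) times the sum is within a factor 1 +- d and an additive eta of r K, so
   the second law follows from the first by sandwiching. *)

lemma exp_minus_diff_le:
  fixes a b :: real
  assumes "0 \<le> a" "a \<le> b"
  shows "exp (-a) - exp (-b) \<le> b - a"
proof -
  have "exp (-a) - exp (-b) = exp (-a) * (1 - exp (-(b - a)))"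
    by (simp add: algebra_simps flip: exp_add)
  also have "\<dots> \<le> 1 - exp (-(b - a))"
    using assms by (intro mult_left_le_one_le) auto
  also have "\<dots> \<le> b - a"
    using exp_ge_add_one_self[of "-(b - a)"] by linarith
  finally show ?thesis .
qed

lemma min_one_exp_minus_le:
  fixes u s :: real
  assumes "0 \<le> s" "u \<le> s"
  shows "min 1 (exp (-u)) \<le> exp (-s) + (s - u)"
proof (cases "0 \<le> u")
  case True
  then show ?thesis using exp_minus_diff_le[of u s] assms by linarith
next
  case False
  then show ?thesis using exp_minus_diff_le[of 0 s] assms by simp
qed

lemma one_minus_power_le_exp:
  fixes y :: real
  assumes "y \<le> 1"
  shows "(1 - y) ^ k \<le> exp (- (y * k))"
proof -
  have "(1 - y) ^ k \<le> exp (-y) ^ k"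
    using assms exp_ge_add_one_self[of "-y"] by (intro power_mono) auto
  then show ?thesis by (simp flip: exp_of_nat_mult add: algebra_simps)
qed

lemma exp_le_one_minus_power:
  fixes y :: real
  assumes "0 \<le> y" "y \<le> 1/2"
  shows "exp (- ((y + 2 * y\<^sup>2) * k)) \<le> (1 - y) ^ k"
proof -
  have "exp (- (y + 2 * y\<^sup>2)) \<le> exp (ln (1 - y))"
    using ln_one_minus_pos_lower_bound[OF assms] by simp
  also have "\<dots> = 1 - y" using assms by simp
  finally have "exp (- (y + 2 * y\<^sup>2)) ^ k \<le> (1 - y) ^ k" by (intro power_mono) auto
  then show ?thesis by (simp flip: exp_of_nat_mult add: algebra_simps)
qed

lemma enat_le_first_zero_iff:
  "enat m \<le> first_zero \<zeta> \<omega> \<longleftrightarrow> (\<forall>n<m. \<zeta> n \<omega> \<noteq> 0)"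
  unfolding first_zero_def le_INF_iff by (auto simp: not_less[symmetric])

lemma first_zero_eq_enat:
  assumes "\<zeta> N \<omega> = 0"
  obtains k where "k \<le> N" "first_zero \<zeta> \<omega> = enat k" "\<forall>n<k. \<zeta> n \<omega> \<noteq> 0" "\<zeta> k \<omega> = 0"
proof
  let ?k = "LEAST n. \<zeta> n \<omega> = 0"
  show zero: "\<zeta> ?k \<omega> = 0" by (rule LeastI[of _ N]) (rule assms)
  show "?k \<le> N" by (rule Least_le) (rule assms)
  show nonzero: "\<forall>n<?k. \<zeta> n \<omega> \<noteq> 0" by (auto dest: not_less_Least)
  have "enat ?k \<le> first_zero \<zeta> \<omega>" using nonzero by (simp only: enat_le_first_zero_iff)
  moreover have "first_zero \<zeta> \<omega> \<le> enat ?k"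
    unfolding first_zero_def by (rule INF_lower) (simp add: zero)
  ultimately show "first_zero \<zeta> \<omega> = enat ?k" by (rule antisym[rotated])
qed

lemma ennreal_le_mult_enat_iff:
  fixes r s :: real
  assumes "0 \<le> r"
  shows "ennreal s \<le> ennreal r * ennreal_of_enat (enat k) \<longleftrightarrow> s \<le> r * real k"
proof -
  have eq: "ennreal r * ennreal_of_enat (enat k) = ennreal (r * real k)"
    using assms by (simp add: ennreal_mult ennreal_of_nat_eq_real_of_nat)
  have "0 \<le> r * real k" using assms by simp
  then show ?thesis unfolding eq by (cases "0 \<le> s") (auto simp: ennreal_neg)
qed

lemma ennreal_le_mult_first_zero_iff:
  fixes r s :: real
  assumes "0 < r" "0 < s"
  shows "ennreal s \<le> ennreal r * ennreal_of_enat K \<longleftrightarrow> enat (nat \<lceil>s / r\<rceil>) \<le> K"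
proof (cases K)
  case (enat k)
  have "s \<le> r * real k \<longleftrightarrow> s / r \<le> real k" using assms by (simp add: field_simps)
  also have "\<dots> \<longleftrightarrow> nat \<lceil>s / r\<rceil> \<le> k" by (simp add: ceiling_le_iff nat_le_iff)
  finally show ?thesis using enat ennreal_le_mult_enat_iff[of r s k] assms by simp
next
  case infinity
  then show ?thesis using assms by (simp add: ennreal_mult_top)
qed

lemma eventually_at_right_0_iff:
  "eventually P (at_right (0::real)) \<longleftrightarrow> (\<exists>\<epsilon>0>0. \<forall>\<epsilon>. 0 < \<epsilon> \<and> \<epsilon> < \<epsilon>0 \<longrightarrow> P \<epsilon>)"
  unfolding eventually_at_right_field by blast

lemma (in prob_space) square_integrable_of_AE_abs_le:
  fixes f :: "'a \<Rightarrow> real"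
  assumes [measurable]: "f \<in> borel_measurable M" and bound: "AE \<omega> in M. \<bar>f \<omega>\<bar> \<le> b"
  shows "integrable M (\<lambda>\<omega>. (f \<omega>)\<^sup>2)" "(\<integral>\<omega>. (f \<omega>)\<^sup>2 \<partial>M) \<le> b\<^sup>2"
proof -
  have sq: "AE \<omega> in M. (f \<omega>)\<^sup>2 \<le> b\<^sup>2"
    using bound
  proof eventually_elim
    case (elim \<omega>)
    then show ?case using power_mono[OF elim abs_ge_zero[of "f \<omega>"], of 2] by simp
  qed
  show int: "integrable M (\<lambda>\<omega>. (f \<omega>)\<^sup>2)"
    by (rule Bochner_Integration.integrable_bound[of _ "\<lambda>_. b\<^sup>2"]) (use sq in auto)
  have "(\<integral>\<omega>. (f \<omega>)\<^sup>2 \<partial>M) \<le> (\<integral>\<omega>. b\<^sup>2 \<partial>M)"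
    using sq by (intro integral_mono_AE int) auto
  then show "(\<integral>\<omega>. (f \<omega>)\<^sup>2 \<partial>M) \<le> b\<^sup>2" by (simp add: prob_space)
qed

lemma (in prob_space) prob_le_of_subset_Un:
  assumes "A \<subseteq> B \<union> X" "B \<in> sets M" "X \<in> sets M"
  shows "prob A \<le> prob B + prob X"
  using finite_measure_mono[OF assms(1)] measure_Un_le[OF assms(2,3)] assms(2,3) by auto

locale killed_process = prob_space M for M :: "'a measure" +
  fixes F :: "nat \<Rightarrow> 'a measure" and \<xi> \<zeta> :: "nat \<Rightarrow> 'a \<Rightarrow> real"
  assumes subalg: "\<And>n. subalgebra M (F n)"
    and filt: "\<And>n m. n \<le> m \<Longrightarrow> sets (F n) \<subseteq> sets (F m)"
    and adapt_xi: "\<And>n. \<xi> n \<in> borel_measurable (F n)"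
    and adapt_zeta: "\<And>n. \<zeta> n \<in> borel_measurable (F n)"
    and zeta01: "\<And>n \<omega>. \<omega> \<in> space M \<Longrightarrow> \<zeta> n \<omega> \<in> {0, 1}"
    and zeta0: "\<And>\<omega>. \<omega> \<in> space M \<Longrightarrow> \<zeta> 0 \<omega> = 1"
    and absorb: "\<And>n m \<omega>. \<omega> \<in> space M \<Longrightarrow> n \<le> m \<Longrightarrow> \<zeta> n \<omega> = 0 \<Longrightarrow> \<zeta> m \<omega> = 0"
begin

lemma measurable_zeta [measurable]: "\<zeta> n \<in> borel_measurable M"
  using measurable_from_subalg[OF subalg adapt_zeta] .

lemma measurable_xi [measurable]: "\<xi> n \<in> borel_measurable M"
  using measurable_from_subalg[OF subalg adapt_xi] .

lemma alive_iff_not_killed: "\<omega> \<in> space M \<Longrightarrow> \<zeta> n \<omega> = 1 \<longleftrightarrow> \<zeta> n \<omega> \<noteq> 0"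
  using zeta01[of \<omega> n] by auto

definition survival_prob :: "nat \<Rightarrow> real" where
  "survival_prob n = prob {\<omega>\<in>space M. \<zeta> n \<omega> = 1}"

definition kill_prob :: "nat \<Rightarrow> real" where
  "kill_prob n = cond_prob M (\<lambda>\<omega>. \<zeta> (Suc n) \<omega> = 0) (\<lambda>\<omega>. \<zeta> n \<omega> = 1)"

lemma survival_prob_0: "survival_prob 0 = 1"
proof -
  have "{\<omega>\<in>space M. \<zeta> 0 \<omega> = 1} = space M" using zeta0 by auto
  then show ?thesis unfolding survival_prob_def by (simp add: prob_space)
qed

lemma survival_prob_Suc: "survival_prob (Suc n) = survival_prob n * (1 - kill_prob n)"
proof -
  let ?A = "{\<omega>\<in>space M. \<zeta> n \<omega> = 1}"
  let ?B = "{\<omega>\<in>space M. \<zeta> (Suc n) \<omega> = 0 \<and> \<zeta> n \<omega> = 1}"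
  have [measurable]: "?A \<in> sets M" "?B \<in> sets M" by measurable
  have "{\<omega>\<in>space M. \<zeta> (Suc n) \<omega> = 1} = ?A - ?B"
    using absorb[of _ n "Suc n"] by (auto simp: alive_iff_not_killed)
  then have survive: "survival_prob (Suc n) = prob ?A - prob ?B"
    unfolding survival_prob_def by (auto intro: finite_measure_Diff)
  have kill: "kill_prob n = prob ?B / prob ?A"
    unfolding kill_prob_def cond_prob_def by simp
  have "prob ?B \<le> prob ?A" by (intro finite_measure_mono) auto
  then have "prob ?B = kill_prob n * prob ?A"
    unfolding kill by (cases "prob ?A = 0") (auto simp: measure_le_0_iff)
  then show ?thesis using survive by (simp add: survival_prob_def algebra_simps)
qed

lemma survival_prob_bounds:
  assumes "\<And>n. lo \<le> kill_prob n" "\<And>n. kill_prob n \<le> hi" "hi \<le> 1"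
  shows "(1 - hi) ^ k \<le> survival_prob k \<and> survival_prob k \<le> (1 - lo) ^ k"
proof (induction k)
  case 0
  then show ?case by (simp add: survival_prob_0)
next
  case (Suc k)
  have "lo \<le> 1" using assms(1)[of 0] assms(2)[of 0] assms(3) by linarith
  moreover have "0 \<le> survival_prob k" unfolding survival_prob_def by simp
  ultimately have "(1 - hi) ^ k * (1 - hi) \<le> survival_prob k * (1 - kill_prob k)"
    and "survival_prob k * (1 - kill_prob k) \<le> (1 - lo) ^ k * (1 - lo)"
    using Suc assms(1,2)[of k] assms(3) by (intro mult_mono; simp)+
  then show ?case unfolding survival_prob_Suc power_Suc2 by blast
qed

lemma hitting_time_tail_event:
  assumes "0 < r" "0 < s"
  shows "{\<omega>\<in>space M. ennreal s \<le> ennreal r * ennreal_of_enat (first_zero \<zeta> \<omega>)}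
       = {\<omega>\<in>space M. \<zeta> (nat \<lceil>s / r\<rceil> - 1) \<omega> = 1}"
proof -
  define m where "m = nat \<lceil>s / r\<rceil>"
  have "(1::int) \<le> \<lceil>s / r\<rceil>" using assms by (simp add: one_le_ceiling)
  then have "1 \<le> m" unfolding m_def by linarith
  then have "(\<forall>n<m. \<zeta> n \<omega> \<noteq> 0) \<longleftrightarrow> \<zeta> (m - 1) \<omega> = 1" if "\<omega> \<in> space M" for \<omega>
    using absorb[OF that, of _ "m - 1"] by (auto simp: alive_iff_not_killed[OF that] less_Suc_eq_le[symmetric])
  then show ?thesis
    by (auto simp: ennreal_le_mult_first_zero_iff[OF assms] m_def[symmetric] enat_le_first_zero_iff)
qed

lemma hitting_time_tail_sets [measurable]:
  "0 < r \<Longrightarrow> 0 < s \<Longrightarrow>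
    {\<omega>\<in>space M. ennreal s \<le> ennreal r * ennreal_of_enat (first_zero \<zeta> \<omega>)} \<in> sets M"
  by (subst hitting_time_tail_event) auto

lemma survival_prob_upper:
  assumes r: "0 < r" and d: "0 \<le> d" "d \<le> 1" "(1 + d) * r \<le> 1"
    and kill: "\<And>n. (1 - d) * r \<le> kill_prob n" "\<And>n. kill_prob n \<le> (1 + d) * r"
    and s: "0 \<le> s" "s - r \<le> r * k"
  shows "survival_prob k - exp (-s) \<le> s * d + r"
proof -
  have "survival_prob k \<le> (1 - (1 - d) * r) ^ k"
    using survival_prob_bounds[OF kill] d by blast
  also have "\<dots> \<le> exp (- ((1 - d) * r * k))"
  proof (rule one_minus_power_le_exp)
    have "(1 - d) * r \<le> (1 + d) * r" using d r by (intro mult_right_mono) auto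
    then show "(1 - d) * r \<le> 1" using d by linarith
  qed
  also have "\<dots> \<le> exp (- ((1 - d) * (s - r)))"
    using s d by (simp add: mult.assoc mult_left_mono)
  finally have "survival_prob k \<le> min 1 (exp (- ((1 - d) * (s - r))))"
    unfolding survival_prob_def by simp
  also have "\<dots> \<le> exp (-s) + (s - (1 - d) * (s - r))"
  proof (rule min_one_exp_minus_le)
    have "d * r \<le> r" "0 \<le> d * s" using d r s by (auto simp: mult_left_le_one_le)
    then show "(1 - d) * (s - r) \<le> s" by (simp add: algebra_simps)
  qed (rule s)
  also have "\<dots> = exp (-s) + s * d + (1 - d) * r" by (simp add: algebra_simps)
  finally have "survival_prob k \<le> exp (-s) + s * d + (1 - d) * r" .
  moreover have "(1 - d) * r \<le> r" using d r by simp
  ultimately show ?thesis by linarith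
qed

lemma survival_prob_lower:
  assumes r: "0 < r" and d: "0 \<le> d" "d \<le> 1" "(1 + d) * r \<le> 1/2"
    and kill: "\<And>n. (1 - d) * r \<le> kill_prob n" "\<And>n. kill_prob n \<le> (1 + d) * r"
    and s: "r * k \<le> s"
  shows "exp (-s) - survival_prob k \<le> s * d + 8 * s * r"
proof -
  have "0 \<le> s" using s r by (smt (verit) of_nat_0_le_iff zero_le_mult_iff)
  define y where "y = (1 + d) * r"
  define v where "v = (1 + d) * s + 2 * (1 + d)\<^sup>2 * r * s"
  have "(y + 2 * y\<^sup>2) * k = (1 + d) * (r * k) + 2 * (1 + d)\<^sup>2 * r * (r * k)"
    by (simp add: y_def power2_eq_square algebra_simps)
  also have "\<dots> \<le> v"
    unfolding v_def using s d r by (intro add_mono mult_left_mono) auto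
  finally have "exp (-v) \<le> exp (- ((y + 2 * y\<^sup>2) * k))" by simp
  also have "\<dots> \<le> (1 - y) ^ k"
    using d r unfolding y_def by (intro exp_le_one_minus_power) auto
  also have "\<dots> \<le> survival_prob k"
    using survival_prob_bounds[OF kill] d unfolding y_def by auto
  finally have "exp (-s) - survival_prob k \<le> exp (-s) - exp (-v)" by simp
  also have "\<dots> \<le> v - s"
  proof (rule exp_minus_diff_le)
    have "v = s + (d * s + 2 * (1 + d)\<^sup>2 * r * s)" by (simp add: v_def algebra_simps)
    then show "s \<le> v" using \<open>0 \<le> s\<close> d r by simp
  qed (rule \<open>0 \<le> s\<close>)
  also have "\<dots> \<le> s * d + 8 * s * r"
  proof -
    have "(1 + d)\<^sup>2 \<le> 2\<^sup>2" using d by (intro power_mono) auto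
    then have "2 * (1 + d)\<^sup>2 * r * s \<le> 8 * r * s"
      using \<open>0 \<le> s\<close> r by (intro mult_right_mono) auto
    then show ?thesis unfolding v_def by (simp add: algebra_simps)
  qed
  finally show ?thesis .
qed

lemma hitting_time_tail_error:
  assumes r: "0 < r" and d: "0 \<le> d" "d \<le> 1" "(1 + d) * r \<le> 1/2"
    and kill: "\<And>n. (1 - d) * r \<le> kill_prob n" "\<And>n. kill_prob n \<le> (1 + d) * r"
    and s: "0 \<le> s"
  shows "\<bar>prob {\<omega>\<in>space M. ennreal s \<le> ennreal r * ennreal_of_enat (first_zero \<zeta> \<omega>)} - exp (-s)\<bar>
           \<le> s * d + 8 * s * r + r"
proof (cases "s = 0")
  case True
  then show ?thesis using r by (simp add: prob_space)
next
  case False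
  define k where "k = nat \<lceil>s / r\<rceil> - 1"
  have "(1::int) \<le> \<lceil>s / r\<rceil>" using r s False by (simp add: one_le_ceiling)
  then have "s / r - 1 \<le> real k" "real k \<le> s / r" unfolding k_def by (simp_all add: of_nat_diff) linarith+
  then have "s - r \<le> r * k" "r * k \<le> s" using r by (simp_all add: field_simps)
  moreover have "prob {\<omega>\<in>space M. ennreal s \<le> ennreal r * ennreal_of_enat (first_zero \<zeta> \<omega>)}
      = survival_prob k"
    using r s False unfolding survival_prob_def k_def by (subst hitting_time_tail_event) auto
  moreover note survival_prob_upper[OF r d(1,2) _ kill s, of k] survival_prob_lower[OF r d kill, of k s]
  moreover have "0 \<le> s * r" using r s by simp
  ultimately show ?thesis using d r by (auto simp: abs_le_iff)
qed

lemma subalgebra_F: "n \<le> m \<Longrightarrow> subalgebra (F m) (F n)"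
  using subalg[of n] subalg[of m] filt[of n m] unfolding subalgebra_def by auto

lemma measurable_F_mono: "n \<le> m \<Longrightarrow> f \<in> borel_measurable (F n) \<Longrightarrow> f \<in> borel_measurable (F m)"
  using measurable_from_subalg[OF subalgebra_F] by blast

lemma sigma_finite_subalgebra_F: "sigma_finite_subalgebra M (F n)"
  by (intro finite_measure_subalgebra_is_sigma_finite)
     (simp add: finite_measure_subalgebra_def finite_measure_subalgebra_axioms_def subalg finite_measure_axioms)

definition drift :: "nat \<Rightarrow> 'a \<Rightarrow> real" where
  "drift n = real_cond_exp M (F n) (\<xi> (Suc n))"

lemma measurable_drift_F: "drift n \<in> borel_measurable (F n)"
  unfolding drift_def by simp

lemma measurable_drift [measurable]: "drift n \<in> borel_measurable M"
  unfolding drift_def by simp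

definition deviation :: "nat \<Rightarrow> 'a \<Rightarrow> real" where
  "deviation N \<omega> = (\<Sum>n<N. \<zeta> n \<omega> * (\<xi> (Suc n) \<omega> - drift n \<omega>))"

lemma measurable_deviation_F: "deviation N \<in> borel_measurable (F N)"
  unfolding deviation_def
proof (intro borel_measurable_sum borel_measurable_times borel_measurable_diff)
  fix n assume "n \<in> {..<N}"
  then have "n \<le> N" "Suc n \<le> N" by auto
  then show "\<zeta> n \<in> borel_measurable (F N)" "\<xi> (Suc n) \<in> borel_measurable (F N)"
    "drift n \<in> borel_measurable (F N)"
    using measurable_F_mono adapt_zeta adapt_xi measurable_drift_F by blast+
qed

lemma measurable_deviation [measurable]: "deviation N \<in> borel_measurable M"
  using measurable_from_subalg[OF subalg measurable_deviation_F] .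

lemma increment_second_moment:
  assumes "0 \<le> C"
    and "AE \<omega> in M. nn_cond_exp M (F n) (\<lambda>\<omega>. ennreal ((\<xi> (Suc n) \<omega>)\<^sup>2)) \<omega> \<le> ennreal C"
  shows "integrable M (\<lambda>\<omega>. (\<xi> (Suc n) \<omega>)\<^sup>2)" "(\<integral>\<omega>. (\<xi> (Suc n) \<omega>)\<^sup>2 \<partial>M) \<le> C"
proof -
  interpret sigma_finite_subalgebra M "F n" by (rule sigma_finite_subalgebra_F)
  have "(\<integral>\<^sup>+\<omega>. ennreal ((\<xi> (Suc n) \<omega>)\<^sup>2) \<partial>M)
      = (\<integral>\<^sup>+\<omega>. 1 * nn_cond_exp M (F n) (\<lambda>\<omega>. ennreal ((\<xi> (Suc n) \<omega>)\<^sup>2)) \<omega> \<partial>M)"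
    using nn_cond_exp_intg[of "\<lambda>_. 1" "\<lambda>\<omega>. ennreal ((\<xi> (Suc n) \<omega>)\<^sup>2)"] by simp
  also have "\<dots> \<le> (\<integral>\<^sup>+\<omega>. ennreal C \<partial>M)"
    using assms(2) by (intro nn_integral_mono_AE) auto
  also have "\<dots> = ennreal C" by (simp add: emeasure_space_1)
  finally have le: "(\<integral>\<^sup>+\<omega>. ennreal ((\<xi> (Suc n) \<omega>)\<^sup>2) \<partial>M) \<le> ennreal C" .
  then show "integrable M (\<lambda>\<omega>. (\<xi> (Suc n) \<omega>)\<^sup>2)"
    by (intro integrableI_bounded) (auto simp: top_unique intro: le_less_trans)
  have "(\<integral>\<omega>. (\<xi> (Suc n) \<omega>)\<^sup>2 \<partial>M) = enn2real (\<integral>\<^sup>+\<omega>. ennreal ((\<xi> (Suc n) \<omega>)\<^sup>2) \<partial>M)"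
    by (rule integral_eq_nn_integral) auto
  also have "\<dots> \<le> C" using le assms(1) by (simp add: enn2real_leI)
  finally show "(\<integral>\<omega>. (\<xi> (Suc n) \<omega>)\<^sup>2 \<partial>M) \<le> C" .
qed

lemma deviation_increment_second_moment:
  assumes "integrable M (\<lambda>\<omega>. (\<xi> (Suc N) \<omega>)\<^sup>2)" "integrable M (\<lambda>\<omega>. (drift N \<omega>)\<^sup>2)"
  shows "integrable M (\<lambda>\<omega>. (\<zeta> N \<omega> * (\<xi> (Suc N) \<omega> - drift N \<omega>))\<^sup>2)"
    "(\<integral>\<omega>. (\<zeta> N \<omega> * (\<xi> (Suc N) \<omega> - drift N \<omega>))\<^sup>2 \<partial>M)
       \<le> 2 * (\<integral>\<omega>. (\<xi> (Suc N) \<omega>)\<^sup>2 \<partial>M) + 2 * (\<integral>\<omega>. (drift N \<omega>)\<^sup>2 \<partial>M)"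
proof -
  have bound: "(\<zeta> N \<omega> * (\<xi> (Suc N) \<omega> - drift N \<omega>))\<^sup>2 \<le> 2 * (\<xi> (Suc N) \<omega>)\<^sup>2 + 2 * (drift N \<omega>)\<^sup>2"
    if "\<omega> \<in> space M" for \<omega>
  proof -
    have "(\<zeta> N \<omega> * (\<xi> (Suc N) \<omega> - drift N \<omega>))\<^sup>2 \<le> (\<xi> (Suc N) \<omega> - drift N \<omega>)\<^sup>2"
      using zeta01[OF that, of N] by auto
    also have "\<dots> \<le> 2 * (\<xi> (Suc N) \<omega>)\<^sup>2 + 2 * (drift N \<omega>)\<^sup>2"
      using sum_squares_bound[of "\<xi> (Suc N) \<omega>" "- drift N \<omega>"] by (simp add: power2_diff)
    finally show ?thesis .
  qed
  show int: "integrable M (\<lambda>\<omega>. (\<zeta> N \<omega> * (\<xi> (Suc N) \<omega> - drift N \<omega>))\<^sup>2)"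
    by (rule Bochner_Integration.integrable_bound[of _ "\<lambda>\<omega>. 2 * (\<xi> (Suc N) \<omega>)\<^sup>2 + 2 * (drift N \<omega>)\<^sup>2"])
       (use assms bound in \<open>auto intro!: AE_I2\<close>)
  show "(\<integral>\<omega>. (\<zeta> N \<omega> * (\<xi> (Suc N) \<omega> - drift N \<omega>))\<^sup>2 \<partial>M)
       \<le> 2 * (\<integral>\<omega>. (\<xi> (Suc N) \<omega>)\<^sup>2 \<partial>M) + 2 * (\<integral>\<omega>. (drift N \<omega>)\<^sup>2 \<partial>M)"
    using integral_mono[OF int _ bound] assms by simp
qed

lemma deviation_Suc_second_moment:
  assumes dev: "integrable M (\<lambda>\<omega>. (deviation N \<omega>)\<^sup>2)"
    and xi: "integrable M (\<lambda>\<omega>. (\<xi> (Suc N) \<omega>)\<^sup>2)" and drift: "integrable M (\<lambda>\<omega>. (drift N \<omega>)\<^sup>2)"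
  shows "integrable M (\<lambda>\<omega>. (deviation (Suc N) \<omega>)\<^sup>2)"
    "(\<integral>\<omega>. (deviation (Suc N) \<omega>)\<^sup>2 \<partial>M)
       = (\<integral>\<omega>. (deviation N \<omega>)\<^sup>2 \<partial>M) + (\<integral>\<omega>. (\<zeta> N \<omega> * (\<xi> (Suc N) \<omega> - drift N \<omega>))\<^sup>2 \<partial>M)"
proof -
  interpret sigma_finite_subalgebra M "F N" by (rule sigma_finite_subalgebra_F)
  define f where "f \<omega> = deviation N \<omega> * \<zeta> N \<omega>" for \<omega>
  have fF: "f \<in> borel_measurable (F N)"
    unfolding f_def using measurable_deviation_F adapt_zeta by simp
  have bound: "\<bar>f \<omega> * \<xi> (Suc N) \<omega>\<bar> \<le> (deviation N \<omega>)\<^sup>2 + (\<xi> (Suc N) \<omega>)\<^sup>2"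
    if "\<omega> \<in> space M" for \<omega>
  proof -
    have "\<bar>f \<omega> * \<xi> (Suc N) \<omega>\<bar> \<le> \<bar>deviation N \<omega>\<bar> * \<bar>\<xi> (Suc N) \<omega>\<bar>"
      using zeta01[OF that, of N] by (auto simp: f_def abs_mult)
    also have "\<dots> \<le> (deviation N \<omega>)\<^sup>2 + (\<xi> (Suc N) \<omega>)\<^sup>2"
      using sum_squares_bound[of "\<bar>deviation N \<omega>\<bar>" "\<bar>\<xi> (Suc N) \<omega>\<bar>"]
        mult_nonneg_nonneg[OF abs_ge_zero abs_ge_zero, of "deviation N \<omega>" "\<xi> (Suc N) \<omega>"]
      by (simp only: power2_abs)
    finally show ?thesis .
  qed
  have fxi: "integrable M (\<lambda>\<omega>. f \<omega> * \<xi> (Suc N) \<omega>)"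
  proof (rule Bochner_Integration.integrable_bound)
    show "integrable M (\<lambda>\<omega>. (deviation N \<omega>)\<^sup>2 + (\<xi> (Suc N) \<omega>)\<^sup>2)"
      using dev xi by (rule Bochner_Integration.integrable_add)
    show "(\<lambda>\<omega>. f \<omega> * \<xi> (Suc N) \<omega>) \<in> borel_measurable M"
      unfolding f_def by measurable
    show "AE \<omega> in M. norm (f \<omega> * \<xi> (Suc N) \<omega>) \<le> norm ((deviation N \<omega>)\<^sup>2 + (\<xi> (Suc N) \<omega>)\<^sup>2)"
      using bound by (intro AE_I2) simp
  qed
  \<comment> \<open>The tower property makes the cross term between the past sum and the new increment vanish.\<close>
  have fdrift: "integrable M (\<lambda>\<omega>. f \<omega> * drift N \<omega>)"
    and orth: "(\<integral>\<omega>. f \<omega> * drift N \<omega> \<partial>M) = (\<integral>\<omega>. f \<omega> * \<xi> (Suc N) \<omega> \<partial>M)"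
    using real_cond_exp_intg[OF fxi fF] unfolding drift_def by auto
  have inc: "integrable M (\<lambda>\<omega>. (\<zeta> N \<omega> * (\<xi> (Suc N) \<omega> - drift N \<omega>))\<^sup>2)"
    by (rule deviation_increment_second_moment(1)[OF xi drift])
  have eq: "(deviation (Suc N) \<omega>)\<^sup>2 = (deviation N \<omega>)\<^sup>2 + 2 * (f \<omega> * \<xi> (Suc N) \<omega>)
      - 2 * (f \<omega> * drift N \<omega>) + (\<zeta> N \<omega> * (\<xi> (Suc N) \<omega> - drift N \<omega>))\<^sup>2" for \<omega>
  proof -
    have "deviation (Suc N) \<omega> = deviation N \<omega> + \<zeta> N \<omega> * (\<xi> (Suc N) \<omega> - drift N \<omega>)"
      by (simp add: deviation_def)
    then show ?thesis unfolding f_def by algebra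
  qed
  show "integrable M (\<lambda>\<omega>. (deviation (Suc N) \<omega>)\<^sup>2)"
    unfolding eq using dev fxi fdrift inc by auto
  show "(\<integral>\<omega>. (deviation (Suc N) \<omega>)\<^sup>2 \<partial>M)
       = (\<integral>\<omega>. (deviation N \<omega>)\<^sup>2 \<partial>M) + (\<integral>\<omega>. (\<zeta> N \<omega> * (\<xi> (Suc N) \<omega> - drift N \<omega>))\<^sup>2 \<partial>M)"
    unfolding eq using dev fxi fdrift inc orth by simp
qed

lemma deviation_second_moment:
  assumes "\<And>n. integrable M (\<lambda>\<omega>. (\<xi> (Suc n) \<omega>)\<^sup>2)" "\<And>n. (\<integral>\<omega>. (\<xi> (Suc n) \<omega>)\<^sup>2 \<partial>M) \<le> a"
    and "\<And>n. integrable M (\<lambda>\<omega>. (drift n \<omega>)\<^sup>2)" "\<And>n. (\<integral>\<omega>. (drift n \<omega>)\<^sup>2 \<partial>M) \<le> b"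
  shows "integrable M (\<lambda>\<omega>. (deviation N \<omega>)\<^sup>2) \<and> (\<integral>\<omega>. (deviation N \<omega>)\<^sup>2 \<partial>M) \<le> N * (2 * a + 2 * b)"
proof (induction N)
  case 0
  then show ?case by (simp add: deviation_def)
next
  case (Suc N)
  then show ?case
    using deviation_Suc_second_moment[OF conjunct1[OF Suc] assms(1,3)]
      deviation_increment_second_moment(2)[OF assms(1,3), of N] assms(2,4)[of N]
    by (simp add: algebra_simps)
qed

definition killed_sum :: "'a \<Rightarrow> real" where
  "killed_sum \<omega> = (\<Sum>n. \<xi> (Suc n) \<omega> * \<zeta> n \<omega>)"

lemma measurable_killed_sum [measurable]: "killed_sum \<in> borel_measurable M"
  unfolding killed_sum_def by measurable

lemma killed_sum_eq_deviation_plus_drift: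
  assumes \<omega>: "\<omega> \<in> space M" and dead: "\<zeta> N \<omega> = 0"
  obtains k where "k \<le> N" "first_zero \<zeta> \<omega> = enat k"
    "killed_sum \<omega> = deviation N \<omega> + (\<Sum>n<k. drift n \<omega>)"
proof -
  obtain k where "k \<le> N" and K: "first_zero \<zeta> \<omega> = enat k"
    and alive: "\<forall>n<k. \<zeta> n \<omega> \<noteq> 0" and "\<zeta> k \<omega> = 0"
    using first_zero_eq_enat[of \<zeta> N \<omega>, OF dead] by metis
  then have zeta_eq: "\<zeta> n \<omega> = (if n < k then 1 else 0)" for n
    using absorb[OF \<omega>, of k n] alive_iff_not_killed[OF \<omega>, of n] by auto
  have "killed_sum \<omega> = (\<Sum>n<k. \<xi> (Suc n) \<omega>)"
    unfolding killed_sum_def by (subst suminf_finite[of "{..<k}"]) (auto simp: zeta_eq)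
  moreover have "deviation N \<omega> = (\<Sum>n<k. \<xi> (Suc n) \<omega> - drift n \<omega>)"
    unfolding deviation_def
    by (rule sum.mono_neutral_cong_right) (use \<open>k \<le> N\<close> in \<open>auto simp: zeta_eq\<close>)
  ultimately show ?thesis
    using that[OF \<open>k \<le> N\<close> K] by (simp add: sum_subtractf)
qed

definition good_event :: "nat \<Rightarrow> real \<Rightarrow> real \<Rightarrow> real \<Rightarrow> 'a set" where
  "good_event N b d e =
     {\<omega>\<in>space M. \<zeta> N \<omega> = 0 \<and> \<bar>deviation N \<omega>\<bar> < b \<and> (\<forall>n. \<bar>drift n \<omega> / e - 1\<bar> < d)}"

lemma good_event_sets [measurable]: "good_event N b d e \<in> sets M"
  unfolding good_event_def by measurable

lemma killed_sum_near_hitting_time: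
  assumes good: "\<omega> \<in> good_event N (\<eta> * e / r) d e" and e: "0 < e" and r: "0 < r"
  obtains k where "first_zero \<zeta> \<omega> = enat k"
    "(1 - d) * (r * k) - \<eta> \<le> r / e * killed_sum \<omega>" "r / e * killed_sum \<omega> \<le> (1 + d) * (r * k) + \<eta>"
proof -
  from good have \<omega>: "\<omega> \<in> space M" and dead: "\<zeta> N \<omega> = 0"
    and dev: "\<bar>r / e * deviation N \<omega>\<bar> < \<eta>" and drift: "\<And>n. \<bar>drift n \<omega> / e - 1\<bar> < d"
    using e r by (auto simp: good_event_def abs_mult field_simps)
  obtain k where K: "first_zero \<zeta> \<omega> = enat k"
    and sum: "killed_sum \<omega> = deviation N \<omega> + (\<Sum>n<k. drift n \<omega>)"
    using killed_sum_eq_deviation_plus_drift[OF \<omega> dead] by metis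
  have "(1 - d) * e \<le> drift n \<omega>" "drift n \<omega> \<le> (1 + d) * e" for n
    using drift[of n] e by (auto simp: abs_less_iff field_simps)
  then have "k * ((1 - d) * e) \<le> (\<Sum>n<k. drift n \<omega>)" "(\<Sum>n<k. drift n \<omega>) \<le> k * ((1 + d) * e)"
    using sum_bounded_below[of "{..<k}" "(1 - d) * e" "\<lambda>n. drift n \<omega>"]
      sum_bounded_above[of "{..<k}" "\<lambda>n. drift n \<omega>" "(1 + d) * e"] by auto
  then have "r / e * (k * ((1 - d) * e)) \<le> r / e * (\<Sum>n<k. drift n \<omega>)"
    "r / e * (\<Sum>n<k. drift n \<omega>) \<le> r / e * (k * ((1 + d) * e))"
    using e r by (intro mult_left_mono; simp)+
  moreover have "r / e * (k * ((1 - d) * e)) = (1 - d) * (r * k)"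
    "r / e * (k * ((1 + d) * e)) = (1 + d) * (r * k)"
    using e by simp_all
  ultimately have "(1 - d) * (r * k) \<le> r / e * (\<Sum>n<k. drift n \<omega>)"
    "r / e * (\<Sum>n<k. drift n \<omega>) \<le> (1 + d) * (r * k)"
    by simp_all
  moreover have "r / e * killed_sum \<omega> = r / e * deviation N \<omega> + r / e * (\<Sum>n<k. drift n \<omega>)"
    unfolding sum by (simp add: distrib_left)
  moreover have "- \<eta> < r / e * deviation N \<omega>" "r / e * deviation N \<omega> < \<eta>"
    using dev unfolding abs_less_iff by linarith+
  ultimately show ?thesis
    using that[OF K] by linarith
qed

lemma AE_abs_drift_le:
  assumes "0 < e" "0 \<le> d" "AE \<omega> in M. \<bar>drift n \<omega> / e - 1\<bar> < d"
  shows "AE \<omega> in M. \<bar>drift n \<omega>\<bar> \<le> (1 + d) * e"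
  using assms(3)
proof eventually_elim
  case (elim \<omega>)
  then have "(1 - d) * e < drift n \<omega>" "drift n \<omega> < (1 + d) * e"
    using assms(1) by (auto simp: abs_less_iff field_simps)
  moreover have "- ((1 + d) * e) \<le> (1 - d) * e" using assms(1,2) by (simp add: algebra_simps)
  ultimately show ?case by linarith
qed

lemma prob_deviation_ge_le:
  assumes e: "0 < e" and d: "0 \<le> d" and C: "0 \<le> C" and b: "0 < b"
    and drift: "\<And>n. AE \<omega> in M. \<bar>drift n \<omega> / e - 1\<bar> < d"
    and second: "\<And>n. AE \<omega> in M. nn_cond_exp M (F n) (\<lambda>\<omega>. ennreal ((\<xi> (Suc n) \<omega>)\<^sup>2)) \<omega> \<le> ennreal (C * e\<^sup>2)"
  shows "prob {\<omega>\<in>space M. b \<le> \<bar>deviation N \<omega>\<bar>} \<le> N * (2 * C + 2 * (1 + d)\<^sup>2) * e\<^sup>2 / b\<^sup>2"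
proof -
  have "0 \<le> C * e\<^sup>2" using C by simp
  note xi = increment_second_moment[OF this second]
  note drift_sq = square_integrable_of_AE_abs_le[OF measurable_drift AE_abs_drift_le[OF e d drift]]
  have dev: "integrable M (\<lambda>\<omega>. (deviation N \<omega>)\<^sup>2)"
    "(\<integral>\<omega>. (deviation N \<omega>)\<^sup>2 \<partial>M) \<le> N * (2 * (C * e\<^sup>2) + 2 * ((1 + d) * e)\<^sup>2)"
    using deviation_second_moment[OF xi drift_sq] by auto
  have "prob {\<omega>\<in>space M. b \<le> \<bar>deviation N \<omega>\<bar>} \<le> (\<integral>\<omega>. (deviation N \<omega>)\<^sup>2 \<partial>M) / b\<^sup>2"
    using dev(1) b by (intro second_moment_method) auto
  also have "\<dots> \<le> N * (2 * (C * e\<^sup>2) + 2 * ((1 + d) * e)\<^sup>2) / b\<^sup>2"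
    using dev(2) by (intro divide_right_mono) auto
  also have "\<dots> = N * (2 * C + 2 * (1 + d)\<^sup>2) * e\<^sup>2 / b\<^sup>2"
    by (rule arg_cong[of _ _ "\<lambda>x. x / b\<^sup>2"]) algebra
  finally show ?thesis .
qed

lemma prob_not_good_event_le:
  assumes e: "0 < e" and r: "0 < r" and d: "0 \<le> d" "(1 + d) * r \<le> 1" and C: "0 \<le> C" and b: "0 < b"
    and kill: "\<And>n. (1 - d) * r \<le> kill_prob n" "\<And>n. kill_prob n \<le> (1 + d) * r"
    and drift: "\<And>n. AE \<omega> in M. \<bar>drift n \<omega> / e - 1\<bar> < d"
    and second: "\<And>n. AE \<omega> in M. nn_cond_exp M (F n) (\<lambda>\<omega>. ennreal ((\<xi> (Suc n) \<omega>)\<^sup>2)) \<omega> \<le> ennreal (C * e\<^sup>2)"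
  shows "prob (space M - good_event N b d e)
           \<le> exp (- ((1 - d) * r * N)) + N * (2 * C + 2 * (1 + d)\<^sup>2) * e\<^sup>2 / b\<^sup>2"
proof -
  let ?X = "{\<omega>\<in>space M. \<zeta> N \<omega> = 1}"
    and ?Y = "{\<omega>\<in>space M. b \<le> \<bar>deviation N \<omega>\<bar>}"
    and ?Z = "{\<omega>\<in>space M. \<not> (\<forall>n. \<bar>drift n \<omega> / e - 1\<bar> < d)}"
  have [measurable]: "?X \<in> sets M" "?Y \<in> sets M" "?Z \<in> sets M" by measurable
  have "space M - good_event N b d e \<subseteq> ?X \<union> ?Y \<union> ?Z"
    using alive_iff_not_killed by (auto simp: good_event_def)
  then have "prob (space M - good_event N b d e) \<le> prob (?X \<union> ?Y) + prob ?Z"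
    by (intro prob_le_of_subset_Un) auto
  also have "prob (?X \<union> ?Y) \<le> prob ?X + prob ?Y"
    by (intro measure_Un_le) auto
  finally have "prob (space M - good_event N b d e) \<le> prob ?X + prob ?Y + prob ?Z" by simp
  moreover have "prob ?Z = 0"
    using AE_iff_measurable[of ?Z M "\<lambda>\<omega>. \<forall>n. \<bar>drift n \<omega> / e - 1\<bar> < d"] drift
    by (simp add: AE_all_countable emeasure_eq_measure)
  moreover have "prob ?X \<le> exp (- ((1 - d) * r * N))"
  proof -
    have "prob ?X \<le> (1 - (1 - d) * r) ^ N"
      using survival_prob_bounds[OF kill d(2)] unfolding survival_prob_def by blast
    also have "\<dots> \<le> exp (- ((1 - d) * r * N))"
    proof (rule one_minus_power_le_exp)
      have "(1 - d) * r \<le> (1 + d) * r" using d r by (intro mult_right_mono) auto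
      then show "(1 - d) * r \<le> 1" using d by linarith
    qed
    finally show ?thesis .
  qed
  ultimately show ?thesis
    using prob_deviation_ge_le[OF e d(1) C b drift second, of N] by linarith
qed

lemma killed_sum_tail_subset:
  assumes e: "0 < e" and r: "0 < r" and d: "0 \<le> d" and s: "(1 + d) * s \<le> t - \<eta>"
  shows "{\<omega>\<in>space M. t \<le> r / e * killed_sum \<omega>}
    \<subseteq> {\<omega>\<in>space M. ennreal s \<le> ennreal r * ennreal_of_enat (first_zero \<zeta> \<omega>)}
      \<union> (space M - good_event N (\<eta> * e / r) d e)"
proof
  fix \<omega> assume A: "\<omega> \<in> {\<omega>\<in>space M. t \<le> r / e * killed_sum \<omega>}"
  show "\<omega> \<in> {\<omega>\<in>space M. ennreal s \<le> ennreal r * ennreal_of_enat (first_zero \<zeta> \<omega>)}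
      \<union> (space M - good_event N (\<eta> * e / r) d e)"
  proof (cases "\<omega> \<in> good_event N (\<eta> * e / r) d e")
    case True
    then obtain k where K: "first_zero \<zeta> \<omega> = enat k"
      and upper: "r / e * killed_sum \<omega> \<le> (1 + d) * (r * k) + \<eta>"
      using killed_sum_near_hitting_time[OF _ e r] by metis
    have "(1 + d) * s \<le> (1 + d) * (r * k)" using A upper s by simp
    then have "s \<le> r * k" using d by simp
    then show ?thesis using A K ennreal_le_mult_enat_iff[of r s k] r by simp
  qed (use A in auto)
qed

lemma hitting_time_tail_subset:
  assumes e: "0 < e" and r: "0 < r" and d: "d \<le> 1" and s: "t + \<eta> \<le> (1 - d) * s"
  shows "{\<omega>\<in>space M. ennreal s \<le> ennreal r * ennreal_of_enat (first_zero \<zeta> \<omega>)}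
    \<subseteq> {\<omega>\<in>space M. t \<le> r / e * killed_sum \<omega>} \<union> (space M - good_event N (\<eta> * e / r) d e)"
proof
  fix \<omega> assume E: "\<omega> \<in> {\<omega>\<in>space M. ennreal s \<le> ennreal r * ennreal_of_enat (first_zero \<zeta> \<omega>)}"
  show "\<omega> \<in> {\<omega>\<in>space M. t \<le> r / e * killed_sum \<omega>} \<union> (space M - good_event N (\<eta> * e / r) d e)"
  proof (cases "\<omega> \<in> good_event N (\<eta> * e / r) d e")
    case True
    then obtain k where K: "first_zero \<zeta> \<omega> = enat k"
      and lower: "(1 - d) * (r * k) - \<eta> \<le> r / e * killed_sum \<omega>"
      using killed_sum_near_hitting_time[OF _ e r] by metis
    have "s \<le> r * k" using E K ennreal_le_mult_enat_iff[of r s k] r by simp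
    then have "(1 - d) * s \<le> (1 - d) * (r * k)" using d by (intro mult_left_mono) auto
    then show ?thesis using E lower s by simp
  qed (use E in auto)
qed

lemma killed_sum_tail_upper:
  assumes e: "0 < e" and r: "0 < r" and d: "0 \<le> d" "d \<le> 1" "(1 + d) * r \<le> 1/2"
    and kill: "\<And>n. (1 - d) * r \<le> kill_prob n" "\<And>n. kill_prob n \<le> (1 + d) * r"
    and t: "0 \<le> t" and \<eta>: "0 < \<eta>"
    and bad: "prob (space M - good_event N (\<eta> * e / r) d e) \<le> \<beta>"
  shows "prob {\<omega>\<in>space M. t \<le> r / e * killed_sum \<omega>} - exp (-t) \<le> \<eta> + 2 * t * d + 8 * t * r + r + \<beta>"
proof (cases "t \<le> \<eta>")
  case True
  have "0 \<le> \<beta>" using bad measure_nonneg order_trans by blast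
  moreover have "1 - exp (-t) \<le> t" using exp_minus_diff_le[of 0 t] t by simp
  moreover have "0 \<le> t * d" "0 \<le> t * r" using d t r by simp_all
  ultimately show ?thesis
    using True r prob_le_1[of "{\<omega>\<in>space M. t \<le> r / e * killed_sum \<omega>}"] by linarith
next
  case False
  define s where "s = (t - \<eta>) / (1 + d)"
  have s: "0 < s" "s \<le> t" "t - s \<le> \<eta> + t * d" "(1 + d) * s \<le> t - \<eta>"
  proof -
    show "0 < s" using False d by (simp add: s_def)
    show "s \<le> t" using t d \<eta> by (simp add: s_def pos_divide_le_eq algebra_simps)
    have "t - s = (t * d + \<eta>) / (1 + d)" using d by (simp add: s_def field_simps)
    also have "\<dots> \<le> t * d + \<eta>" using t d \<eta> by (simp add: pos_divide_le_eq algebra_simps)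
    finally show "t - s \<le> \<eta> + t * d" by simp
    show "(1 + d) * s \<le> t - \<eta>" using d by (simp add: s_def)
  qed
  have "prob {\<omega>\<in>space M. t \<le> r / e * killed_sum \<omega>}
      \<le> prob {\<omega>\<in>space M. ennreal s \<le> ennreal r * ennreal_of_enat (first_zero \<zeta> \<omega>)} + \<beta>"
    using prob_le_of_subset_Un[OF killed_sum_tail_subset[where N = N, OF e r d(1) s(4)]] bad r s(1) by auto
  moreover have "prob {\<omega>\<in>space M. ennreal s \<le> ennreal r * ennreal_of_enat (first_zero \<zeta> \<omega>)}
      \<le> exp (-s) + (s * d + 8 * s * r + r)"
    using hitting_time_tail_error[OF r d kill, of s] s by (simp add: abs_le_iff)
  moreover have "exp (-s) - exp (-t) \<le> t - s" using exp_minus_diff_le s by auto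
  moreover have "s * d \<le> t * d" "8 * s * r \<le> 8 * t * r" using s d r by (auto intro: mult_right_mono)
  ultimately show ?thesis using s by linarith
qed

lemma killed_sum_tail_lower:
  assumes e: "0 < e" and r: "0 < r" and d: "0 \<le> d" "d \<le> 1/2" "(1 + d) * r \<le> 1/2"
    and kill: "\<And>n. (1 - d) * r \<le> kill_prob n" "\<And>n. kill_prob n \<le> (1 + d) * r"
    and t: "0 \<le> t" and \<eta>: "0 < \<eta>"
    and bad: "prob (space M - good_event N (\<eta> * e / r) d e) \<le> \<beta>"
  shows "exp (-t) - prob {\<omega>\<in>space M. t \<le> r / e * killed_sum \<omega>}
           \<le> \<eta> + 4 * (t + \<eta>) * d + 16 * (t + \<eta>) * r + r + \<beta>"
proof -
  define s where "s = (t + \<eta>) / (1 - d)"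
  have s: "0 < s" "t \<le> s" "s \<le> (t + \<eta>) * (1 + 2 * d)" "t + \<eta> \<le> (1 - d) * s"
  proof -
    show "0 < s" using d t \<eta> by (simp add: s_def)
    show "t \<le> s" using d t \<eta> by (simp add: s_def pos_le_divide_eq algebra_simps)
    have "0 \<le> (t + \<eta>) * (d * (1 - 2 * d))" using t \<eta> d by simp
    then show "s \<le> (t + \<eta>) * (1 + 2 * d)"
      using d by (simp add: s_def pos_divide_le_eq algebra_simps)
    show "t + \<eta> \<le> (1 - d) * s" using d by (simp add: s_def)
  qed
  then have s2: "s \<le> 2 * (t + \<eta>)" using t \<eta> d mult_left_mono[of "1 + 2 * d" 2 "t + \<eta>"] by simp
  have "prob {\<omega>\<in>space M. ennreal s \<le> ennreal r * ennreal_of_enat (first_zero \<zeta> \<omega>)}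
      \<le> prob {\<omega>\<in>space M. t \<le> r / e * killed_sum \<omega>} + \<beta>"
    using prob_le_of_subset_Un[OF hitting_time_tail_subset[where N = N, OF e r _ s(4)]] bad d by auto
  moreover have "exp (-s) - (s * d + 8 * s * r + r)
      \<le> prob {\<omega>\<in>space M. ennreal s \<le> ennreal r * ennreal_of_enat (first_zero \<zeta> \<omega>)}"
    using hitting_time_tail_error[OF r d(1) _ d(3) kill, of s] d s by (simp add: abs_le_iff)
  moreover have "exp (-t) - exp (-s) \<le> s - t" using exp_minus_diff_le t s by auto
  moreover have "s * d \<le> 2 * (t + \<eta>) * d" "8 * s * r \<le> 16 * (t + \<eta>) * r"
    using s2 d r by (auto intro: mult_right_mono)
  moreover have "s - t \<le> \<eta> + 2 * (t + \<eta>) * d" using s(3) by (simp add: algebra_simps)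
  ultimately show ?thesis by linarith
qed

(* Run the process for N close to 2 L / r steps: long enough for it to be killed except with
   probability exp (-L), short enough for Chebyshev to keep the martingale part below eta e / r. *)
lemma prob_not_good_event_small:
  assumes e: "0 < e" and r: "0 < r" and d: "0 \<le> d" "d \<le> 1/2" "(1 + d) * r \<le> 1/2" and C: "0 \<le> C"
    and kill: "\<And>n. (1 - d) * r \<le> kill_prob n" "\<And>n. kill_prob n \<le> (1 + d) * r"
    and drift: "\<And>n. AE \<omega> in M. \<bar>drift n \<omega> / e - 1\<bar> < d"
    and second: "\<And>n. AE \<omega> in M. nn_cond_exp M (F n) (\<lambda>\<omega>. ennreal ((\<xi> (Suc n) \<omega>)\<^sup>2)) \<omega> \<le> ennreal (C * e\<^sup>2)"
    and \<eta>: "0 < \<eta>" and L: "0 \<le> L"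
  obtains N where "prob (space M - good_event N (\<eta> * e / r) d e) \<le> exp (- L) + (2 * C + 5) * (2 * L + 1) / \<eta>\<^sup>2 * r"
proof
  define N where "N = nat \<lceil>2 * L / r\<rceil>"
  have "real N = of_int \<lceil>2 * L / r\<rceil>" using L r unfolding N_def by simp
  then have "2 * L / r \<le> N" "N \<le> 2 * L / r + 1"
    using le_of_int_ceiling of_int_ceiling_le_add_one by metis+
  then have N: "2 * L \<le> r * N" "r * N \<le> 2 * L + r"
    using r by (simp_all add: field_simps)
  have "1/2 * (r * N) \<le> (1 - d) * (r * N)" using d r by (intro mult_right_mono) auto
  then have "exp (- ((1 - d) * r * N)) \<le> exp (- L)" using N(1) unfolding mult.assoc by simp
  moreover have "(2 * C + 2 * (1 + d)\<^sup>2) * (r * N) \<le> (2 * C + 5) * (2 * L + 1)"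
  proof (rule mult_mono)
    have "(1 + d)\<^sup>2 \<le> (3/2)\<^sup>2" using d by (intro power_mono) auto
    then show "2 * C + 2 * (1 + d)\<^sup>2 \<le> 2 * C + 5" by (simp add: power2_eq_square)
    have "r \<le> (1 + d) * r" using d r by simp
    then show "r * N \<le> 2 * L + 1" using N d by linarith
  qed (use C L r in auto)
  moreover have "N * (2 * C + 2 * (1 + d)\<^sup>2) * e\<^sup>2 / (\<eta> * e / r)\<^sup>2
      = (2 * C + 2 * (1 + d)\<^sup>2) * (r * N) / \<eta>\<^sup>2 * r"
    using e r \<eta> by (simp add: field_simps power2_eq_square)
  ultimately have "exp (- ((1 - d) * r * N)) + N * (2 * C + 2 * (1 + d)\<^sup>2) * e\<^sup>2 / (\<eta> * e / r)\<^sup>2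
      \<le> exp (- L) + (2 * C + 5) * (2 * L + 1) / \<eta>\<^sup>2 * r"
    using r \<eta> by (auto intro!: add_mono mult_right_mono divide_right_mono)
  moreover have "prob (space M - good_event N (\<eta> * e / r) d e)
      \<le> exp (- ((1 - d) * r * N)) + N * (2 * C + 2 * (1 + d)\<^sup>2) * e\<^sup>2 / (\<eta> * e / r)\<^sup>2"
    using e r \<eta> d C kill drift second by (intro prob_not_good_event_le) auto
  ultimately show "prob (space M - good_event N (\<eta> * e / r) d e)
      \<le> exp (- L) + (2 * C + 5) * (2 * L + 1) / \<eta>\<^sup>2 * r"
    by linarith
qed

lemma exponential_tail_errors:
  assumes e: "0 < e" and r: "0 < r" and d: "0 \<le> d" "d \<le> 1/2" "(1 + d) * r \<le> 1/2" and C: "0 \<le> C"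
    and kill: "\<And>n. \<bar>kill_prob n / r - 1\<bar> < d"
    and drift: "\<And>n. AE \<omega> in M. \<bar>drift n \<omega> / e - 1\<bar> < d"
    and second: "\<And>n. AE \<omega> in M. nn_cond_exp M (F n) (\<lambda>\<omega>. ennreal ((\<xi> (Suc n) \<omega>)\<^sup>2)) \<omega> \<le> ennreal (C * e\<^sup>2)"
    and t: "0 \<le> t" and \<eta>: "0 < \<eta>" and L: "0 \<le> L"
  defines "err \<equiv> \<eta> + 4 * (t + \<eta>) * d + exp (- L) + (16 * (t + \<eta>) + 1 + (2 * C + 5) * (2 * L + 1) / \<eta>\<^sup>2) * r"
  shows "\<bar>prob {\<omega>\<in>space M. ennreal t \<le> ennreal r * ennreal_of_enat (first_zero \<zeta> \<omega>)} - exp (-t)\<bar> \<le> err"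
    and "\<bar>prob {\<omega>\<in>space M. t \<le> r / e * killed_sum \<omega>} - exp (-t)\<bar> \<le> err"
proof -
  have kill_bounds: "(1 - d) * r \<le> kill_prob n" "kill_prob n \<le> (1 + d) * r" for n
    using kill[of n] r by (auto simp: abs_less_iff field_simps)
  define \<beta> where "\<beta> = exp (- L) + (2 * C + 5) * (2 * L + 1) / \<eta>\<^sup>2 * r"
  have err: "err = \<eta> + 4 * (t + \<eta>) * d + 16 * (t + \<eta>) * r + r + \<beta>"
    unfolding err_def \<beta>_def by (simp add: algebra_simps)
  have "0 \<le> exp (- L) + (2 * C + 5) * (2 * L + 1) / \<eta>\<^sup>2 * r" using C L r by simp
  then have sizes: "0 \<le> \<beta>" "0 \<le> (t + \<eta>) * d" "0 \<le> (t + \<eta>) * r"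
    "t * d \<le> (t + \<eta>) * d" "t * r \<le> (t + \<eta>) * r"
    using t \<eta> d r unfolding \<beta>_def by (auto intro: mult_right_mono)
  have "\<bar>prob {\<omega>\<in>space M. ennreal t \<le> ennreal r * ennreal_of_enat (first_zero \<zeta> \<omega>)} - exp (-t)\<bar>
      \<le> t * d + 8 * t * r + r"
    using hitting_time_tail_error[OF r d(1) _ d(3) kill_bounds t] d by simp
  then show "\<bar>prob {\<omega>\<in>space M. ennreal t \<le> ennreal r * ennreal_of_enat (first_zero \<zeta> \<omega>)} - exp (-t)\<bar> \<le> err"
    unfolding err using sizes \<eta> by linarith
  obtain N where bad: "prob (space M - good_event N (\<eta> * e / r) d e) \<le> \<beta>"
    using prob_not_good_event_small[OF e r d C kill_bounds drift second \<eta> L] unfolding \<beta>_def by blast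
  show "\<bar>prob {\<omega>\<in>space M. t \<le> r / e * killed_sum \<omega>} - exp (-t)\<bar> \<le> err"
    using killed_sum_tail_upper[OF e r d(1) _ d(3) kill_bounds t \<eta> bad]
      killed_sum_tail_lower[OF e r d kill_bounds t \<eta> bad] sizes d
    unfolding err abs_le_iff by linarith
qed

lemma exponential_tails_close:
  assumes e: "0 < e" and r: "0 < r" and d: "0 \<le> d" "d \<le> 1/2" "(1 + d) * r \<le> 1/2"
    and kill: "\<And>n. \<bar>cond_prob M (\<lambda>\<omega>. \<zeta> (Suc n) \<omega> = 0) (\<lambda>\<omega>. \<zeta> n \<omega> = 1) / r - 1\<bar> < d"
    and drift: "\<And>n. AE \<omega> in M. \<bar>real_cond_exp M (F n) (\<xi> (Suc n)) \<omega> / e - 1\<bar> < d"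
    and second: "\<And>n. AE \<omega> in M. nn_cond_exp M (F n) (\<lambda>\<omega>. ennreal ((\<xi> (Suc n) \<omega>)\<^sup>2)) \<omega> \<le> ennreal (C * e\<^sup>2)"
    and t: "0 \<le> t" and \<eta>: "0 < \<eta>" and L: "0 \<le> L"
    and small: "\<eta> + 4 * (t + \<eta>) * d + exp (- L)
      + (16 * (t + \<eta>) + 1 + (2 * max C 0 + 5) * (2 * L + 1) / \<eta>\<^sup>2) * r < \<delta>"
  shows "\<bar>prob {\<omega>\<in>space M. ennreal t \<le> ennreal r * ennreal_of_enat (first_zero \<zeta> \<omega>)} - exp (-t)\<bar> < \<delta>
       \<and> \<bar>prob {\<omega>\<in>space M. t \<le> r / e * (\<Sum>n. \<xi> (Suc n) \<omega> * \<zeta> n \<omega>)} - exp (-t)\<bar> < \<delta>"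
proof -
  have mono: "ennreal (C * e\<^sup>2) \<le> ennreal (max C 0 * e\<^sup>2)" by (intro ennreal_leI mult_right_mono) auto
  have "AE \<omega> in M. nn_cond_exp M (F n) (\<lambda>\<omega>. ennreal ((\<xi> (Suc n) \<omega>)\<^sup>2)) \<omega> \<le> ennreal (max C 0 * e\<^sup>2)"
    for n using second[of n] by eventually_elim (use mono in \<open>blast intro: order_trans\<close>)
  note bounds = exponential_tail_errors[OF e r d _ kill[folded kill_prob_def] drift[folded drift_def] this t \<eta> L]
  show ?thesis
    using le_less_trans[OF bounds(1) small] le_less_trans[OF bounds(2) small]
    unfolding killed_sum_def by simp
qed

end

lemma tail_error_eventually_small:
  fixes t \<delta> C :: real and r :: "'a \<Rightarrow> real"
  assumes t: "0 \<le> t" and \<delta>: "0 < \<delta>" and r: "(r \<longlongrightarrow> 0) F"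
  obtains d \<eta> L where "0 < d" "d \<le> 1/2" "0 < \<eta>" "0 \<le> L"
    "\<forall>\<^sub>F x in F. (1 + d) * r x < 1/2 \<and> \<eta> + 4 * (t + \<eta>) * d + exp (- L)
        + (16 * (t + \<eta>) + 1 + (2 * max C 0 + 5) * (2 * L + 1) / \<eta>\<^sup>2) * r x < \<delta>"
proof -
  define \<eta> where "\<eta> = \<delta> / 4"
  define L where "L = max 0 (ln (4 / \<delta>))"
  define d where "d = min (1/2) (\<delta> / (16 * (t + \<eta>)))"
  define K where "K = 16 * (t + \<eta>) + 1 + (2 * max C 0 + 5) * (2 * L + 1) / \<eta>\<^sup>2"
  have t\<eta>: "0 < t + \<eta>" using t \<delta> by (simp add: \<eta>_def)
  have "exp (- L) \<le> exp (- ln (4 / \<delta>))" by (simp add: L_def)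
  also have "\<dots> = \<delta> / 4" using \<delta> by (simp add: exp_minus)
  finally have "exp (- L) \<le> \<delta> / 4" .
  moreover have "4 * (t + \<eta>) * d \<le> 4 * (t + \<eta>) * (\<delta> / (16 * (t + \<eta>)))"
    using t\<eta> by (intro mult_left_mono) (auto simp: d_def)
  moreover have "4 * (t + \<eta>) * (\<delta> / (16 * (t + \<eta>))) = \<delta> / 4" using t\<eta> by (simp add: field_simps)
  ultimately have limit: "\<eta> + 4 * (t + \<eta>) * d + exp (- L) + K * 0 < \<delta>" using \<delta> \<eta>_def by linarith
  have "((\<lambda>x. \<eta> + 4 * (t + \<eta>) * d + exp (- L) + K * r x)
      \<longlongrightarrow> \<eta> + 4 * (t + \<eta>) * d + exp (- L) + K * 0) F"
    by (intro tendsto_intros r)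
  from order_tendstoD(2)[OF this limit]
  have "\<forall>\<^sub>F x in F. \<eta> + 4 * (t + \<eta>) * d + exp (- L) + K * r x < \<delta>" .
  moreover have "((\<lambda>x. (1 + d) * r x) \<longlongrightarrow> (1 + d) * 0) F"
    by (intro tendsto_intros r)
  then have "\<forall>\<^sub>F x in F. (1 + d) * r x < 1/2"
    by (rule order_tendstoD(2)) simp
  ultimately have "\<forall>\<^sub>F x in F. (1 + d) * r x < 1/2 \<and> \<eta> + 4 * (t + \<eta>) * d + exp (- L) + K * r x < \<delta>"
    by (simp add: eventually_conj_iff)
  moreover have "0 < d" using t\<eta> \<delta> by (simp add: d_def)
  moreover have "d \<le> 1/2" unfolding d_def by (rule min.cobounded1)
  moreover have "0 < \<eta>" "0 \<le> L" using \<delta> by (simp_all add: \<eta>_def L_def)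
  ultimately show ?thesis unfolding K_def by (intro that)
qed

theorem lemma6p4:
  fixes S :: "'b set"
    and M :: "'b \<Rightarrow> real \<Rightarrow> 'a measure"
    and F :: "'b \<Rightarrow> real \<Rightarrow> nat \<Rightarrow> 'a measure"
    and \<xi> \<zeta> :: "'b \<Rightarrow> real \<Rightarrow> nat \<Rightarrow> 'a \<Rightarrow> real"
    and e r :: "real \<Rightarrow> real"
  assumes prob: "\<And>x \<epsilon>. x \<in> S \<Longrightarrow> \<epsilon> > 0 \<Longrightarrow> prob_space (M x \<epsilon>)"
    and subalg: "\<And>x \<epsilon> n. x \<in> S \<Longrightarrow> \<epsilon> > 0 \<Longrightarrow> subalgebra (M x \<epsilon>) (F x \<epsilon> n)"
    and filt: "\<And>x \<epsilon> n m. x \<in> S \<Longrightarrow> \<epsilon> > 0 \<Longrightarrow> n \<le> m \<Longrightarrow> sets (F x \<epsilon> n) \<subseteq> sets (F x \<epsilon> m)"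
    and adapt_xi: "\<And>x \<epsilon> n. x \<in> S \<Longrightarrow> \<epsilon> > 0 \<Longrightarrow> \<xi> x \<epsilon> n \<in> borel_measurable (F x \<epsilon> n)"
    and adapt_zeta: "\<And>x \<epsilon> n. x \<in> S \<Longrightarrow> \<epsilon> > 0 \<Longrightarrow> \<zeta> x \<epsilon> n \<in> borel_measurable (F x \<epsilon> n)"
    and xi0: "\<And>x \<epsilon> \<omega>. x \<in> S \<Longrightarrow> \<epsilon> > 0 \<Longrightarrow> \<omega> \<in> space (M x \<epsilon>) \<Longrightarrow> \<xi> x \<epsilon> 0 \<omega> = 0"
    and e_pos: "\<And>\<epsilon>. \<epsilon> > 0 \<Longrightarrow> e \<epsilon> > 0"
    and mean: "\<And>\<delta>. \<delta> > 0 \<Longrightarrow> \<exists>\<epsilon>0>0. \<forall>\<epsilon>. 0 < \<epsilon> \<and> \<epsilon> < \<epsilon>0 \<longrightarrow> (\<forall>x\<in>S. \<forall>n.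
        AE \<omega> in M x \<epsilon>. \<bar>real_cond_exp (M x \<epsilon>) (F x \<epsilon> n) (\<xi> x \<epsilon> (Suc n)) \<omega> / e \<epsilon> - 1\<bar> < \<delta>)"
    and second: "\<exists>C. \<exists>\<epsilon>0>0. \<forall>\<epsilon>. 0 < \<epsilon> \<and> \<epsilon> < \<epsilon>0 \<longrightarrow> (\<forall>x\<in>S. \<forall>n.
        AE \<omega> in M x \<epsilon>. nn_cond_exp (M x \<epsilon>) (F x \<epsilon> n) (\<lambda>\<omega>. ennreal ((\<xi> x \<epsilon> (Suc n) \<omega>)\<^sup>2)) \<omega>
            \<le> ennreal (C * (e \<epsilon>)\<^sup>2))"
    and zeta01: "\<And>x \<epsilon> n \<omega>. x \<in> S \<Longrightarrow> \<epsilon> > 0 \<Longrightarrow> \<omega> \<in> space (M x \<epsilon>) \<Longrightarrow> \<zeta> x \<epsilon> n \<omega> \<in> {0, 1}"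
    and zeta0: "\<And>x \<epsilon> \<omega>. x \<in> S \<Longrightarrow> \<epsilon> > 0 \<Longrightarrow> \<omega> \<in> space (M x \<epsilon>) \<Longrightarrow> \<zeta> x \<epsilon> 0 \<omega> = 1"
    and absorb: "\<And>x \<epsilon> n m \<omega>. x \<in> S \<Longrightarrow> \<epsilon> > 0 \<Longrightarrow> \<omega> \<in> space (M x \<epsilon>) \<Longrightarrow> n \<le> m \<Longrightarrow>
        \<zeta> x \<epsilon> n \<omega> = 0 \<Longrightarrow> \<zeta> x \<epsilon> m \<omega> = 0"
    and r_pos: "\<And>\<epsilon>. \<epsilon> > 0 \<Longrightarrow> r \<epsilon> > 0"
    and r_lim: "(r \<longlongrightarrow> 0) (at_right 0)"
    and kill: "\<And>\<delta>. \<delta> > 0 \<Longrightarrow> \<exists>\<epsilon>0>0. \<forall>\<epsilon>. 0 < \<epsilon> \<and> \<epsilon> < \<epsilon>0 \<longrightarrow> (\<forall>x\<in>S. \<forall>n.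
        \<bar>cond_prob (M x \<epsilon>) (\<lambda>\<omega>. \<zeta> x \<epsilon> (Suc n) \<omega> = 0) (\<lambda>\<omega>. \<zeta> x \<epsilon> n \<omega> = 1) / r \<epsilon> - 1\<bar> < \<delta>)"
  shows "\<forall>t\<ge>0. \<forall>\<delta>>0. \<exists>\<epsilon>0>0. \<forall>\<epsilon>. 0 < \<epsilon> \<and> \<epsilon> < \<epsilon>0 \<longrightarrow> (\<forall>x\<in>S.
           \<bar>measure (M x \<epsilon>) {\<omega> \<in> space (M x \<epsilon>).
               ennreal t \<le> ennreal (r \<epsilon>) * ennreal_of_enat (first_zero (\<zeta> x \<epsilon>) \<omega>)} - exp (- t)\<bar> < \<delta>
         \<and> \<bar>measure (M x \<epsilon>) {\<omega> \<in> space (M x \<epsilon>).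
               t \<le> r \<epsilon> / e \<epsilon> * (\<Sum>n. \<xi> x \<epsilon> (Suc n) \<omega> * \<zeta> x \<epsilon> n \<omega>)} - exp (- t)\<bar> < \<delta>)"
proof (unfold eventually_at_right_0_iff[symmetric], intro allI impI)
  fix t \<delta> :: real
  assume t: "0 \<le> t" and \<delta>: "0 < \<delta>"
  let ?hitting = "\<lambda>x \<epsilon>. measure (M x \<epsilon>) {\<omega> \<in> space (M x \<epsilon>).
    ennreal t \<le> ennreal (r \<epsilon>) * ennreal_of_enat (first_zero (\<zeta> x \<epsilon>) \<omega>)}"
  let ?sum = "\<lambda>x \<epsilon>. measure (M x \<epsilon>) {\<omega> \<in> space (M x \<epsilon>).
    t \<le> r \<epsilon> / e \<epsilon> * (\<Sum>n. \<xi> x \<epsilon> (Suc n) \<omega> * \<zeta> x \<epsilon> n \<omega>)}"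
  have process: "killed_process (M x \<epsilon>) (F x \<epsilon>) (\<xi> x \<epsilon>) (\<zeta> x \<epsilon>)" if "x \<in> S" "0 < \<epsilon>" for x \<epsilon>
    using that by (intro killed_process.intro killed_process_axioms.intro prob subalg filt adapt_xi
        adapt_zeta zeta01 zeta0) (auto intro: absorb)
  obtain C where second_ev: "\<forall>\<^sub>F \<epsilon> in at_right 0. \<forall>x\<in>S. \<forall>n. AE \<omega> in M x \<epsilon>.
      nn_cond_exp (M x \<epsilon>) (F x \<epsilon> n) (\<lambda>\<omega>. ennreal ((\<xi> x \<epsilon> (Suc n) \<omega>)\<^sup>2)) \<omega> \<le> ennreal (C * (e \<epsilon>)\<^sup>2)"
    using second unfolding eventually_at_right_0_iff by blast
  obtain d \<eta> L where d: "0 < d" "d \<le> 1/2" and \<eta>: "0 < \<eta>" and L: "0 \<le> L"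
    and small: "\<forall>\<^sub>F \<epsilon> in at_right 0. (1 + d) * r \<epsilon> < 1/2 \<and> \<eta> + 4 * (t + \<eta>) * d + exp (- L)
        + (16 * (t + \<eta>) + 1 + (2 * max C 0 + 5) * (2 * L + 1) / \<eta>\<^sup>2) * r \<epsilon> < \<delta>"
    using tail_error_eventually_small[OF t \<delta> r_lim, where C = C] by blast
  show "\<forall>\<^sub>F \<epsilon> in at_right 0. \<forall>x\<in>S. \<bar>?hitting x \<epsilon> - exp (- t)\<bar> < \<delta> \<and> \<bar>?sum x \<epsilon> - exp (- t)\<bar> < \<delta>"
    using small second_ev eventually_at_right_less[of "0::real"]
      kill[OF d(1), unfolded eventually_at_right_0_iff[symmetric]]
      mean[OF d(1), unfolded eventually_at_right_0_iff[symmetric]]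
    by eventually_elim
       (intro ballI killed_process.exponential_tails_close[OF process, where d = d and \<eta> = \<eta> and L = L and C = C];
        use d t \<eta> L in \<open>auto intro: e_pos r_pos\<close>)
qed

end
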